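(* (1) For every non-empty set $A$ and every mapping $\varphi: A\to\mathbb{M}_A$ in E-form, the magma $\mathbb{E}(\varphi)$ is equidecomposable. (2) Every finitely presented equidecomposable magma $M$ is isomorphic to $\mathbb{E}(\varphi)$ for some non-empty set $A$ and some mapping $\varphi: A\to \mathbb{M}_A$ in E-form.
   Context: A magma is a set with a binary operation $+$. A magma $M$ is equidecomposable if for all $x,y,x',y'\in M$, $x+y=x'+y'$ implies $x=x'$ and $y=y'$. For a non-empty set $A$, $\mathbb{M}_A$ is the free magma on $A$ (non-associative words over $A$, with $x+y=(x,y)$). For $y\in\mathbb{M}_A$, $g(y)\subseteq A$ is the set of letters of $A$ occurring in $y$. A mapping $\varphi: A\to\mathbb{M}_A$ is in E-form if it is injective and $a\in g(\varphi(a))$ for every $a\in A$. For a magma $M$, $M^2$ has the componentwise operation. A congruence on $M$ is an equivalence relation that is a submagma of $M^2$; it is closed if $(x+x',y+y')\in\theta$ implies $(x,y),(x',y')\in\theta$. For $X\subseteq M^2$, $\boxminus(X)$ is the least closed congruence on $M$ containing $X$. Regarding $\varphi$ as $\{(a,\varphi(a)):a\in A\}\subseteq\mathbb{M}_A^2$, put $\mathbb{E}(\varphi)=\mathbb{M}_A/\boxminus(\varphi)$. A presentation is a pair $(A\mid R)$ with $A$ a non-empty set and $R\subseteq\mathbb{M}_A^2$; it defines the magma $\langle A\mid R\rangle=\mathbb{M}_A/\boxminus(R)$. An equidecomposable magma $M$ is finitely presented if $M\cong\langle A\mid R\rangle$ for some presentation with $A$ and $R$ finite. *)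

theory Defs
  imports Main
begin

datatype 'a fm = Gen 'a | Op "'a fm" "'a fm"

primrec letters :: "'a fm \<Rightarrow> 'a set" where
  "letters (Gen a) = {a}"
| "letters (Op x y) = letters x \<union> letters y"

definition free_magma :: "'a set \<Rightarrow> 'a fm set \<times> ('a fm \<Rightarrow> 'a fm \<Rightarrow> 'a fm)" where
  "free_magma A = ({t. letters t \<subseteq> A}, Op)"

type_synonym 'm magma = "'m set \<times> ('m \<Rightarrow> 'm \<Rightarrow> 'm)"

definition carrier :: "'m magma \<Rightarrow> 'm set" where "carrier M = fst M"
definition mop :: "'m magma \<Rightarrow> 'm \<Rightarrow> 'm \<Rightarrow> 'm" where "mop M = snd M"

definition magma :: "'m magma \<Rightarrow> bool" where
  "magma M \<longleftrightarrow> (\<forall>x\<in>carrier M. \<forall>y\<in>carrier M. mop M x y \<in> carrier M)"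

definition equidecomposable :: "'m magma \<Rightarrow> bool" where
  "equidecomposable M \<longleftrightarrow>
     (\<forall>x\<in>carrier M. \<forall>y\<in>carrier M. \<forall>x'\<in>carrier M. \<forall>y'\<in>carrier M.
        mop M x y = mop M x' y' \<longrightarrow> x = x' \<and> y = y')"

definition magma_iso :: "'m magma \<Rightarrow> 'n magma \<Rightarrow> bool" where
  "magma_iso M N \<longleftrightarrow> (\<exists>f. bij_betw f (carrier M) (carrier N) \<and>
     (\<forall>x\<in>carrier M. \<forall>y\<in>carrier M. f (mop M x y) = mop N (f x) (f y)))"

definition congruence :: "'m magma \<Rightarrow> 'm rel \<Rightarrow> bool" where
  "congruence M \<theta> \<longleftrightarrow> equiv (carrier M) \<theta> \<and>
     (\<forall>(x,y)\<in>\<theta>. \<forall>(x',y')\<in>\<theta>. (mop M x x', mop M y y') \<in> \<theta>)"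

definition closed_congruence :: "'m magma \<Rightarrow> 'm rel \<Rightarrow> bool" where
  "closed_congruence M \<theta> \<longleftrightarrow> congruence M \<theta> \<and>
     (\<forall>x\<in>carrier M. \<forall>y\<in>carrier M. \<forall>x'\<in>carrier M. \<forall>y'\<in>carrier M.
        (mop M x x', mop M y y') \<in> \<theta> \<longrightarrow> (x,y) \<in> \<theta> \<and> (x',y') \<in> \<theta>)"

definition closed_cong_gen :: "'m magma \<Rightarrow> 'm rel \<Rightarrow> 'm rel" where
  "closed_cong_gen M X = \<Inter>{\<theta>. closed_congruence M \<theta> \<and> X \<subseteq> \<theta>}"

definition quotient_magma :: "'m magma \<Rightarrow> 'm rel \<Rightarrow> 'm set magma" where
  "quotient_magma M \<theta> = (carrier M // \<theta>,
     (\<lambda>X Y. \<theta> `` {mop M (SOME x. x \<in> X) (SOME y. y \<in> Y)}))"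

definition E_form :: "'a set \<Rightarrow> ('a \<Rightarrow> 'a fm) \<Rightarrow> bool" where
  "E_form A \<phi> \<longleftrightarrow> (\<forall>a\<in>A. \<phi> a \<in> carrier (free_magma A)) \<and> inj_on \<phi> A \<and>
     (\<forall>a\<in>A. a \<in> letters (\<phi> a))"

definition graph_rel :: "'a set \<Rightarrow> ('a \<Rightarrow> 'a fm) \<Rightarrow> 'a fm rel" where
  "graph_rel A \<phi> = {(Gen a, \<phi> a) | a. a \<in> A}"

definition E_magma :: "'a set \<Rightarrow> ('a \<Rightarrow> 'a fm) \<Rightarrow> 'a fm set magma" where
  "E_magma A \<phi> = quotient_magma (free_magma A) (closed_cong_gen (free_magma A) (graph_rel A \<phi>))"

definition presented :: "'a set \<Rightarrow> 'a fm rel \<Rightarrow> 'a fm set magma" where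
  "presented A R = quotient_magma (free_magma A) (closed_cong_gen (free_magma A) R)"

text \<open>Finite presentations; a finite generator set may w.l.o.g. be taken inside nat.\<close>
definition finitely_presented :: "'m magma \<Rightarrow> bool" where
  "finitely_presented M \<longleftrightarrow> (\<exists>(A::nat set) R. A \<noteq> {} \<and> finite A \<and> finite R \<and>
     R \<subseteq> carrier (free_magma A) \<times> carrier (free_magma A) \<and> magma_iso M (presented A R))"

end

(* A quotient of a magma by a closed congruence is always equidecomposable: [x] + [y] =
   [x'] + [y'] means x + y ~ x' + y', and closedness gives x ~ x' and y ~ y'.  This gives (1).

   For (2), a finite presentation <A | R> is transformed without changing the presented magma up
   to isomorphism: drop a relation u = u; split x + y = x' + y' into x = x' and y = y'; use a
   relation a = t with a not in t to eliminate the generator a; if a = T and a = S are both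
   relations, replace the larger one by the componentwise relations of T = S; if a = T and b = T,
   replace b = T by b = a.  Each step decreases the number of generators or, with the generators
   fixed, the weight of R (sum of 3 ^ size over its relations).  When no step applies, every
   relation reads a = t with a occurring in t, and t determines a and vice versa, so a |-> t,
   extended by a |-> a, is a mapping in E-form presenting the same congruence. *)

theory Submission
  imports Defs "HOL-Library.Product_Lexorder"
begin

section \<open>Quotient magmas\<close>

lemma carrier_quotient_magma [simp]: "carrier (quotient_magma M \<theta>) = carrier M // \<theta>"
  by (simp add: quotient_magma_def carrier_def)

lemma magma_iso_refl: "magma_iso M M"
  unfolding magma_iso_def by (rule exI[of _ id]) simp

lemma magma_iso_trans:
  assumes "magma_iso M N" "magma_iso N P"
  shows "magma_iso M P"
proof -
  obtain f where f: "bij_betw f (carrier M) (carrier N)"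
    "\<forall>x\<in>carrier M. \<forall>y\<in>carrier M. f (mop M x y) = mop N (f x) (f y)"
    using assms(1) unfolding magma_iso_def by blast
  obtain g where g: "bij_betw g (carrier N) (carrier P)"
    "\<forall>x\<in>carrier N. \<forall>y\<in>carrier N. g (mop N x y) = mop P (g x) (g y)"
    using assms(2) unfolding magma_iso_def by blast
  have "bij_betw (g \<circ> f) (carrier M) (carrier P)"
    using f(1) g(1) by (rule bij_betw_trans)
  moreover have "\<forall>x\<in>carrier M. \<forall>y\<in>carrier M. (g \<circ> f) (mop M x y) = mop P ((g \<circ> f) x) ((g \<circ> f) y)"
    using f g bij_betwE[OF f(1)] by simp
  ultimately show ?thesis
    unfolding magma_iso_def by blast
qed

lemma congruence_equiv: "congruence M \<theta> \<Longrightarrow> equiv (carrier M) \<theta>"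
  by (simp add: congruence_def)

lemma congruence_mop:
  "congruence M \<theta> \<Longrightarrow> (x, y) \<in> \<theta> \<Longrightarrow> (x', y') \<in> \<theta> \<Longrightarrow> (mop M x x', mop M y y') \<in> \<theta>"
  unfolding congruence_def by blast

lemma closed_congruenceD:
  assumes "closed_congruence M \<theta>" "x \<in> carrier M" "y \<in> carrier M" "x' \<in> carrier M" "y' \<in> carrier M"
    and "(mop M x x', mop M y y') \<in> \<theta>"
  shows "(x, y) \<in> \<theta>" "(x', y') \<in> \<theta>"
  using assms unfolding closed_congruence_def by blast+

lemma quotient_mop_class:
  assumes \<theta>: "congruence M \<theta>" and x: "x \<in> carrier M" and y: "y \<in> carrier M"
  shows "mop (quotient_magma M \<theta>) (\<theta> `` {x}) (\<theta> `` {y}) = \<theta> `` {mop M x y}"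
proof -
  have eq: "equiv (carrier M) \<theta>"
    using \<theta> by (rule congruence_equiv)
  let ?x = "SOME x'. x' \<in> \<theta> `` {x}" and ?y = "SOME y'. y' \<in> \<theta> `` {y}"
  have "?x \<in> \<theta> `` {x}" "?y \<in> \<theta> `` {y}"
    using equiv_class_self[OF eq x] equiv_class_self[OF eq y] by (auto intro: someI)
  then have "(mop M ?x ?y, mop M x y) \<in> \<theta>"
    using eq by (auto intro: congruence_mop[OF \<theta>] elim: equivE symE)
  then show ?thesis
    using eq by (simp add: quotient_magma_def mop_def equiv_class_eq)
qed

lemma equidecomposable_quotient_magma:
  assumes M: "magma M" and \<theta>: "closed_congruence M \<theta>"
  shows "equidecomposable (quotient_magma M \<theta>)"
  unfolding equidecomposable_def carrier_quotient_magma
proof (intro ballI impI)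
  have cong: "congruence M \<theta>" and eq: "equiv (carrier M) \<theta>"
    using \<theta> by (simp_all add: closed_congruence_def congruence_def)
  fix X Y X' Y'
  assume "X \<in> carrier M // \<theta>" "Y \<in> carrier M // \<theta>" "X' \<in> carrier M // \<theta>" "Y' \<in> carrier M // \<theta>"
  then obtain x y x' y' where xy: "x \<in> carrier M" "y \<in> carrier M" "x' \<in> carrier M" "y' \<in> carrier M"
    and X: "X = \<theta> `` {x}" "Y = \<theta> `` {y}" "X' = \<theta> `` {x'}" "Y' = \<theta> `` {y'}"
    by (elim quotientE) blast
  assume "mop (quotient_magma M \<theta>) X Y = mop (quotient_magma M \<theta>) X' Y'"
  then have "\<theta> `` {mop M x y} = \<theta> `` {mop M x' y'}"
    using quotient_mop_class[OF cong] xy X by simp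
  then have "(mop M x y, mop M x' y') \<in> \<theta>"
    using M xy eq by (simp add: magma_def eq_equiv_class_iff)
  then have "(x, x') \<in> \<theta>" "(y, y') \<in> \<theta>"
    using closed_congruenceD[OF \<theta>] xy by blast+
  then show "X = X' \<and> Y = Y'"
    using X eq by (simp add: equiv_class_eq)
qed

lemma magma_iso_quotient_magmaI:
  assumes M: "magma M" and \<theta>: "congruence M \<theta>" and \<eta>: "congruence N \<eta>"
    and maps: "\<And>x. x \<in> carrier M \<Longrightarrow> f x \<in> carrier N"
    and hom: "\<And>x y. x \<in> carrier M \<Longrightarrow> y \<in> carrier M \<Longrightarrow> f (mop M x y) = mop N (f x) (f y)"
    and reflects: "\<And>x y. x \<in> carrier M \<Longrightarrow> y \<in> carrier M \<Longrightarrow> (f x, f y) \<in> \<eta> \<longleftrightarrow> (x, y) \<in> \<theta>"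
    and onto: "\<And>z. z \<in> carrier N \<Longrightarrow> \<exists>x\<in>carrier M. (f x, z) \<in> \<eta>"
  shows "magma_iso (quotient_magma M \<theta>) (quotient_magma N \<eta>)"
proof -
  have eq\<theta>: "equiv (carrier M) \<theta>" and eq\<eta>: "equiv (carrier N) \<eta>"
    using \<theta> \<eta> by (simp_all add: congruence_equiv)
  define F where "F X = \<eta> `` (f ` X)" for X
  have F_class: "F (\<theta> `` {x}) = \<eta> `` {f x}" if x: "x \<in> carrier M" for x
  proof -
    have "\<eta> `` {f x'} = \<eta> `` {f x}" if "(x, x') \<in> \<theta>" for x'
      using that reflects[of x x'] x eq\<theta> eq\<eta>
      by (metis equiv_class_eq_iff equiv_class_eq)
    then show ?thesis
      using equiv_class_self[OF eq\<theta> x] unfolding F_def by blast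
  qed
  have "bij_betw F (carrier M // \<theta>) (carrier N // \<eta>)"
  proof (rule bij_betw_imageI)
    show "inj_on F (carrier M // \<theta>)"
    proof (rule inj_onI)
      fix X Y assume "X \<in> carrier M // \<theta>" "Y \<in> carrier M // \<theta>" and FXY: "F X = F Y"
      then obtain x y where x: "x \<in> carrier M" "X = \<theta> `` {x}" and y: "y \<in> carrier M" "Y = \<theta> `` {y}"
        by (elim quotientE) blast
      then have "(f x, f y) \<in> \<eta>"
        using FXY F_class maps eq\<eta> by (simp add: eq_equiv_class_iff)
      then show "X = Y"
        using reflects x y eq\<theta> by (simp add: equiv_class_eq)
    qed
    show "F ` (carrier M // \<theta>) = carrier N // \<eta>"
    proof (intro equalityI subsetI)
      fix Z assume "Z \<in> F ` (carrier M // \<theta>)"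
      then show "Z \<in> carrier N // \<eta>"
        using F_class maps by (auto elim!: quotientE simp: quotientI)
    next
      fix Z assume "Z \<in> carrier N // \<eta>"
      then obtain z where z: "z \<in> carrier N" "Z = \<eta> `` {z}"
        by (elim quotientE) blast
      then obtain x where x: "x \<in> carrier M" "(f x, z) \<in> \<eta>"
        using onto by blast
      then have "F (\<theta> `` {x}) = Z"
        using F_class z eq\<eta> by (simp add: equiv_class_eq)
      then show "Z \<in> F ` (carrier M // \<theta>)"
        using x by (auto intro: quotientI)
    qed
  qed
  moreover have "F (mop (quotient_magma M \<theta>) X Y) = mop (quotient_magma N \<eta>) (F X) (F Y)"
    if XY: "X \<in> carrier M // \<theta>" "Y \<in> carrier M // \<theta>" for X Y
  proof -
    obtain x y where x: "x \<in> carrier M" "X = \<theta> `` {x}" and y: "y \<in> carrier M" "Y = \<theta> `` {y}"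
      using XY by (elim quotientE) blast
    then show ?thesis
      using M by (simp add: magma_def quotient_mop_class \<theta> \<eta> F_class maps hom)
  qed
  ultimately show ?thesis
    unfolding magma_iso_def carrier_quotient_magma by blast
qed

section \<open>Closed congruences on free magmas\<close>

abbreviation words :: "'a set \<Rightarrow> 'a fm set" where
  "words A \<equiv> {t. letters t \<subseteq> A}"

lemma free_magma_simps [simp]:
  "carrier (free_magma A) = words A" "mop (free_magma A) = Op"
  by (simp_all add: carrier_def mop_def free_magma_def)

lemma magma_free_magma: "magma (free_magma A)"
  by (simp add: magma_def)

inductive_set ccong :: "'a set \<Rightarrow> 'a fm rel \<Rightarrow> 'a fm rel" for A R where
  ccong_rel: "(u, v) \<in> R \<Longrightarrow> (u, v) \<in> ccong A R"
| ccong_refl: "letters u \<subseteq> A \<Longrightarrow> (u, u) \<in> ccong A R"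
| ccong_sym: "(u, v) \<in> ccong A R \<Longrightarrow> (v, u) \<in> ccong A R"
| ccong_trans: "(u, v) \<in> ccong A R \<Longrightarrow> (v, w) \<in> ccong A R \<Longrightarrow> (u, w) \<in> ccong A R"
| ccong_Op: "(x, y) \<in> ccong A R \<Longrightarrow> (x', y') \<in> ccong A R \<Longrightarrow> (Op x x', Op y y') \<in> ccong A R"
| ccong_OpD1: "(Op x x', Op y y') \<in> ccong A R \<Longrightarrow> (x, y) \<in> ccong A R"
| ccong_OpD2: "(Op x x', Op y y') \<in> ccong A R \<Longrightarrow> (x', y') \<in> ccong A R"

lemma ccong_words:
  assumes "R \<subseteq> words A \<times> words A"
  shows "ccong A R \<subseteq> words A \<times> words A"
proof -
  have "letters u \<subseteq> A \<and> letters v \<subseteq> A" if "(u, v) \<in> ccong A R" for u v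
    using that by induction (use assms in auto)
  then show ?thesis
    by auto
qed

lemma closed_congruence_ccong:
  assumes "R \<subseteq> words A \<times> words A"
  shows "closed_congruence (free_magma A) (ccong A R)"
proof -
  have "equiv (words A) (ccong A R)"
  proof (rule equivI)
    show "ccong A R \<subseteq> words A \<times> words A"
      by (rule ccong_words[OF assms])
    show "refl_on (words A) (ccong A R)"
      using ccong_words[OF assms] by (auto intro!: refl_onI ccong_refl)
    show "sym (ccong A R)"
      by (rule symI) (rule ccong_sym)
    show "trans (ccong A R)"
      by (rule transI) (rule ccong_trans)
  qed
  then show ?thesis
    unfolding closed_congruence_def congruence_def free_magma_simps
    by (blast intro: ccong_Op dest: ccong_OpD1 ccong_OpD2)
qed

lemma ccong_least:
  assumes \<theta>: "closed_congruence (free_magma A) \<theta>" and R: "R \<subseteq> \<theta>"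
  shows "ccong A R \<subseteq> \<theta>"
proof -
  have eq: "equiv (words A) \<theta>" and cong: "congruence (free_magma A) \<theta>"
    using \<theta> by (simp_all add: closed_congruence_def congruence_def)
  have closed: "(x, y) \<in> \<theta> \<and> (x', y') \<in> \<theta>" if "(Op x x', Op y y') \<in> \<theta>" for x x' y y'
  proof -
    have "(Op x x', Op y y') \<in> words A \<times> words A"
      using that equiv_type[OF eq] by blast
    then have "x \<in> words A" "x' \<in> words A" "y \<in> words A" "y' \<in> words A"
      by auto
    then show ?thesis
      using closed_congruenceD[OF \<theta>, of x y x' y'] that by simp
  qed
  have "(u, v) \<in> \<theta>" if "(u, v) \<in> ccong A R" for u v
    using that
  proof induction
    case (ccong_rel u v)
    then show ?case using R by blast
  next
    case (ccong_refl u)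
    then show ?case using eq by (simp add: equiv_def refl_on_def)
  next
    case (ccong_sym u v)
    then show ?case using eq by (simp add: equiv_def symD)
  next
    case (ccong_trans u v w)
    then show ?case using eq by (meson equivE transD)
  next
    case (ccong_Op x y x' y')
    then show ?case using congruence_mop[OF cong] by simp
  next
    case (ccong_OpD1 x x' y y')
    then show ?case using closed by blast
  next
    case (ccong_OpD2 x x' y y')
    then show ?case using closed by blast
  qed
  then show ?thesis
    by auto
qed

lemma closed_cong_gen_free_magma:
  assumes "R \<subseteq> words A \<times> words A"
  shows "closed_cong_gen (free_magma A) R = ccong A R"
  unfolding closed_cong_gen_def
proof (rule antisym)
  show "\<Inter>{\<theta>. closed_congruence (free_magma A) \<theta> \<and> R \<subseteq> \<theta>} \<subseteq> ccong A R"
    by (rule Inter_lower) (auto simp: closed_congruence_ccong[OF assms] intro: ccong_rel)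
  show "ccong A R \<subseteq> \<Inter>{\<theta>. closed_congruence (free_magma A) \<theta> \<and> R \<subseteq> \<theta>}"
    by (rule Inter_greatest) (simp add: ccong_least)
qed

lemma presented_eq_quotient_ccong:
  "R \<subseteq> words A \<times> words A \<Longrightarrow> presented A R = quotient_magma (free_magma A) (ccong A R)"
  by (simp add: presented_def closed_cong_gen_free_magma)

lemma congruence_ccong:
  "R \<subseteq> words A \<times> words A \<Longrightarrow> congruence (free_magma A) (ccong A R)"
  using closed_congruence_ccong[of R A] unfolding closed_congruence_def by blast

lemma ccong_map:
  assumes hom: "\<And>x y. f (Op x y) = Op (f x) (f y)"
    and words: "\<And>u. letters u \<subseteq> A \<Longrightarrow> letters (f u) \<subseteq> A'"
    and rel: "\<And>u v. (u, v) \<in> R \<Longrightarrow> (f u, f v) \<in> ccong A' R'"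
    and "(u, v) \<in> ccong A R"
  shows "(f u, f v) \<in> ccong A' R'"
  using assms(4)
proof induction
  case (ccong_rel u v)
  then show ?case by (rule rel)
next
  case (ccong_refl u)
  then show ?case by (intro ccong.ccong_refl words)
next
  case (ccong_sym u v)
  show ?case by (rule ccong.ccong_sym[OF ccong_sym.IH])
next
  case (ccong_trans u v w)
  show ?case by (rule ccong.ccong_trans[OF ccong_trans.IH])
next
  case (ccong_Op x y x' y')
  then show ?case by (simp add: hom ccong.ccong_Op)
next
  case (ccong_OpD1 x x' y y')
  then have "(Op (f x) (f x'), Op (f y) (f y')) \<in> ccong A' R'"
    by (simp add: hom)
  then show ?case by (rule ccong.ccong_OpD1)
next
  case (ccong_OpD2 x x' y y')
  then have "(Op (f x) (f x'), Op (f y) (f y')) \<in> ccong A' R'"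
    by (simp add: hom)
  then show ?case by (rule ccong.ccong_OpD2)
qed

lemma ccong_mono:
  assumes "A \<subseteq> A'" "R \<subseteq> ccong A' R'"
  shows "ccong A R \<subseteq> ccong A' R'"
proof (rule subrelI)
  fix u v assume "(u, v) \<in> ccong A R"
  then have "(id u, id v) \<in> ccong A' R'"
    by (rule ccong_map[rotated -1]) (use assms in auto)
  then show "(u, v) \<in> ccong A' R'"
    by simp
qed

section \<open>Transforming finite presentations\<close>

definition equates :: "'a fm \<times> 'a fm \<Rightarrow> 'a \<Rightarrow> 'a fm \<Rightarrow> bool" where
  "equates p a t \<longleftrightarrow> p = (Gen a, t) \<or> p = (t, Gen a)"

lemma equates_ccong_iff:
  "equates p a t \<Longrightarrow> p \<in> ccong A R \<longleftrightarrow> (Gen a, t) \<in> ccong A R"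
  unfolding equates_def by (metis ccong_sym)

lemma equates_ccong:
  "p \<in> R \<Longrightarrow> equates p a t \<Longrightarrow> (Gen a, t) \<in> ccong A R"
  using equates_ccong_iff[of p a t A R] ccong_rel[of "fst p" "snd p" R A] by simp

lemma equates_words:
  assumes "R \<subseteq> words A \<times> words A" "p \<in> R" "equates p a t"
  shows "a \<in> A" "letters t \<subseteq> A"
  using assms unfolding equates_def by auto

primrec subst :: "('a \<Rightarrow> 'a fm) \<Rightarrow> 'a fm \<Rightarrow> 'a fm" where
  "subst s (Gen a) = s a"
| "subst s (Op x y) = Op (subst s x) (subst s y)"

lemma letters_nonempty: "letters u \<noteq> {}"
  by (induction u) auto

lemma subst_single_notin: "a \<notin> letters u \<Longrightarrow> subst (Gen(a := t)) u = u"
  by (induction u) auto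

lemma letters_subst_single:
  "letters t \<subseteq> A - {a} \<Longrightarrow> letters u \<subseteq> A \<Longrightarrow> letters (subst (Gen(a := t)) u) \<subseteq> A - {a}"
  by (induction u) auto

lemma ccong_subst_single:
  assumes at: "(Gen a, t) \<in> ccong A R" and u: "letters u \<subseteq> A"
  shows "(u, subst (Gen(a := t)) u) \<in> ccong A R"
  using u
proof (induction u)
  case (Gen b)
  then show ?case
    using at by (cases "b = a") (simp_all add: ccong_refl)
next
  case (Op x y)
  then show ?case
    by (simp add: ccong_Op)
qed

lemma ccong_eliminate_iff:
  assumes R: "R \<subseteq> words A \<times> words A" and at: "(Gen a, t) \<in> ccong A R"
    and t: "letters t \<subseteq> A - {a}" and uv: "letters u \<subseteq> A" "letters v \<subseteq> A"
  defines "f \<equiv> subst (Gen(a := t))"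
  shows "(f u, f v) \<in> ccong (A - {a}) (map_prod f f ` R) \<longleftrightarrow> (u, v) \<in> ccong A R"
proof
  have f_ccong: "(w, f w) \<in> ccong A R" if "letters w \<subseteq> A" for w
    unfolding f_def using ccong_subst_single[OF at that] .
  have "map_prod f f ` R \<subseteq> ccong A R"
  proof clarsimp
    fix u' v' assume uv': "(u', v') \<in> R"
    then have "letters u' \<subseteq> A" "letters v' \<subseteq> A"
      using R by auto
    then show "(f u', f v') \<in> ccong A R"
      using ccong_trans[OF ccong_sym[OF f_ccong] ccong_trans[OF ccong_rel[OF uv'] f_ccong]] by blast
  qed
  moreover assume "(f u, f v) \<in> ccong (A - {a}) (map_prod f f ` R)"
  ultimately have "(f u, f v) \<in> ccong A R"
    using ccong_mono[of "A - {a}" A] by blast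
  then show "(u, v) \<in> ccong A R"
    using ccong_trans[OF f_ccong ccong_trans[OF _ ccong_sym[OF f_ccong]]] uv by blast
next
  assume "(u, v) \<in> ccong A R"
  then show "(f u, f v) \<in> ccong (A - {a}) (map_prod f f ` R)"
  proof (rule ccong_map[rotated -1])
    show "f (Op x y) = Op (f x) (f y)" for x y
      by (simp add: f_def)
    show "letters (f w) \<subseteq> A - {a}" if "letters w \<subseteq> A" for w
      unfolding f_def using letters_subst_single[OF t that] .
    show "(f u', f v') \<in> ccong (A - {a}) (map_prod f f ` R)" if "(u', v') \<in> R" for u' v'
      using that by (intro ccong_rel) auto
  qed
qed

lemma eliminate_generator:
  assumes R: "R \<subseteq> words A \<times> words A" and at: "(Gen a, t) \<in> ccong A R"
    and t: "letters t \<subseteq> A - {a}"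
  defines "f \<equiv> subst (Gen(a := t))"
  shows "map_prod f f ` R \<subseteq> words (A - {a}) \<times> words (A - {a})"
    and "magma_iso (presented A R) (presented (A - {a}) (map_prod f f ` R))"
proof -
  let ?R' = "map_prod f f ` R"
  have f_words: "letters (f u) \<subseteq> A - {a}" if "letters u \<subseteq> A" for u
    unfolding f_def using letters_subst_single[OF t that] .
  show R': "?R' \<subseteq> words (A - {a}) \<times> words (A - {a})"
    using R by (auto intro!: f_words)
  show "magma_iso (presented A R) (presented (A - {a}) ?R')"
    unfolding presented_eq_quotient_ccong[OF R] presented_eq_quotient_ccong[OF R']
  proof (rule magma_iso_quotient_magmaI)
    show "\<exists>u\<in>carrier (free_magma A). (f u, z) \<in> ccong (A - {a}) ?R'"
      if "z \<in> carrier (free_magma (A - {a}))" for z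
    proof
      show "z \<in> carrier (free_magma A)"
        using that by auto
      have "a \<notin> letters z"
        using that by auto
      then show "(f z, z) \<in> ccong (A - {a}) ?R'"
        using that by (simp add: f_def subst_single_notin ccong_refl)
    qed
    show "(f u, f v) \<in> ccong (A - {a}) ?R' \<longleftrightarrow> (u, v) \<in> ccong A R"
      if "u \<in> carrier (free_magma A)" "v \<in> carrier (free_magma A)" for u v
      using ccong_eliminate_iff[OF R at t, of u v] that unfolding f_def by simp
    show "f u \<in> carrier (free_magma (A - {a}))" if "u \<in> carrier (free_magma A)" for u
      using that f_words by simp
    show "f (mop (free_magma A) u v) = mop (free_magma (A - {a})) (f u) (f v)" for u v
      by (simp add: f_def)
  qed (simp_all add: magma_free_magma congruence_ccong R R')
qed

definition pair_size :: "'a fm \<times> 'a fm \<Rightarrow> nat" where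
  "pair_size p = max (size (fst p)) (size (snd p))"

lemma pair_size_Pair: "pair_size (u, v) = max (size u) (size v)"
  by (simp add: pair_size_def)

lemma pair_size_equates: "equates p a t \<Longrightarrow> pair_size p = size t"
  by (cases t) (auto simp: equates_def pair_size_def)

text \<open>Since \<open>3 > 2\<close>, replacing one relation by at most two strictly smaller ones decreases the weight.\<close>
definition rel_weight :: "'a fm rel \<Rightarrow> nat" where
  "rel_weight R = (\<Sum>p\<in>R. 3 ^ pair_size p)"

lemma rel_weight_replace_less:
  assumes "finite R" "p \<in> R" "finite Q" "card Q \<le> 2" "\<forall>q\<in>Q. pair_size q < pair_size p"
  shows "rel_weight (R - {p} \<union> Q) < rel_weight R"
proof -
  have "rel_weight (R - {p} \<union> Q) \<le> rel_weight (R - {p}) + rel_weight Q"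
    unfolding rel_weight_def using assms by (simp add: sum_Un_nat)
  moreover have "rel_weight R = 3 ^ pair_size p + rel_weight (R - {p})"
    unfolding rel_weight_def using assms by (simp add: sum.remove)
  moreover have "rel_weight Q < 3 ^ pair_size p"
  proof (cases "Q = {}")
    case True
    then show ?thesis
      by (simp add: rel_weight_def)
  next
    case False
    then have pos: "pair_size p \<ge> 1"
      using assms(5) by fastforce
    have "\<forall>q\<in>Q. (3::nat) ^ pair_size q \<le> 3 ^ (pair_size p - 1)"
      using assms(5) by (auto intro: power_increasing)
    then have "rel_weight Q \<le> card Q * 3 ^ (pair_size p - 1)"
      using sum_bounded_above[of Q "\<lambda>q. (3::nat) ^ pair_size q"] by (simp add: rel_weight_def)
    also have "\<dots> \<le> 2 * 3 ^ (pair_size p - 1)"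
      using assms(4) by simp
    also have "\<dots> < 3 ^ pair_size p"
      using pos by (cases "pair_size p") auto
    finally show ?thesis .
  qed
  ultimately show ?thesis
    by linarith
qed

definition simplifies_to :: "'a set \<Rightarrow> 'a fm rel \<Rightarrow> 'a fm rel \<Rightarrow> bool" where
  "simplifies_to A R R' \<longleftrightarrow> finite R' \<and> R' \<subseteq> words A \<times> words A \<and>
     rel_weight R' < rel_weight R \<and> ccong A R' = ccong A R"

lemma replace_relation:
  assumes R: "finite R" "R \<subseteq> words A \<times> words A" and p: "p \<in> R"
    and Q: "finite Q" "card Q \<le> 2" "\<forall>q\<in>Q. pair_size q < pair_size p"
    and Q_ccong: "Q \<subseteq> ccong A R" and p_ccong: "p \<in> ccong A (R - {p} \<union> Q)"
  shows "simplifies_to A R (R - {p} \<union> Q)"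
  unfolding simplifies_to_def
proof (intro conjI)
  show "finite (R - {p} \<union> Q)"
    using R Q by simp
  show "R - {p} \<union> Q \<subseteq> words A \<times> words A"
    using R(2) Q_ccong ccong_words[OF R(2)] by blast
  show "rel_weight (R - {p} \<union> Q) < rel_weight R"
    using rel_weight_replace_less R p Q by blast
  have "R - {p} \<union> Q \<subseteq> ccong A R"
    using Q_ccong ccong_rel by fast
  moreover have "R \<subseteq> ccong A (R - {p} \<union> Q)"
  proof
    fix q assume "q \<in> R"
    then show "q \<in> ccong A (R - {p} \<union> Q)"
      using p_ccong ccong_rel[of "fst q" "snd q" "R - {p} \<union> Q" A] by (cases "q = p") auto
  qed
  ultimately show "ccong A (R - {p} \<union> Q) = ccong A R"
    by (intro equalityI ccong_mono) simp_all
qed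

lemma drop_trivial_relation:
  assumes R: "finite R" "R \<subseteq> words A \<times> words A" and p: "(u, u) \<in> R"
  shows "simplifies_to A R (R - {(u, u)})"
proof -
  have "letters u \<subseteq> A"
    using R(2) p by blast
  then have "simplifies_to A R (R - {(u, u)} \<union> {})"
    using p by (intro replace_relation R) (simp_all add: ccong_refl)
  then show ?thesis
    by simp
qed

lemma split_relation:
  assumes R: "finite R" "R \<subseteq> words A \<times> words A" and p: "(Op x y, Op x' y') \<in> R"
  shows "simplifies_to A R (R - {(Op x y, Op x' y')} \<union> {(x, x'), (y, y')})"
proof (rule replace_relation[OF R p])
  let ?R' = "R - {(Op x y, Op x' y')} \<union> {(x, x'), (y, y')}"
  show "card {(x, x'), (y, y')} \<le> 2"
    by (simp add: card_insert_le_m1)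
  show "\<forall>q\<in>{(x, x'), (y, y')}. pair_size q < pair_size (Op x y, Op x' y')"
    by (simp add: pair_size_Pair) linarith
  have "(Op x y, Op x' y') \<in> ccong A R"
    using p by (rule ccong_rel)
  note ccong_OpD1[OF this] ccong_OpD2[OF this]
  then show "{(x, x'), (y, y')} \<subseteq> ccong A R"
    by simp
  have "(x, x') \<in> ccong A ?R'" "(y, y') \<in> ccong A ?R'"
    by (simp_all add: ccong_rel)
  then show "(Op x y, Op x' y') \<in> ccong A ?R'"
    by (rule ccong_Op)
qed simp

lemma merge_generator_definitions:
  assumes R: "finite R" "R \<subseteq> words A \<times> words A" and pq: "p \<in> R" "q \<in> R" "p \<noteq> q"
    and eqs: "equates p a (Op t1 t2)" "equates q a (Op s1 s2)"
    and size: "size (Op t1 t2) \<le> size (Op s1 s2)"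
  shows "simplifies_to A R (R - {q} \<union> {(t1, s1), (t2, s2)})"
proof (rule replace_relation[OF R pq(2)])
  let ?R' = "R - {q} \<union> {(t1, s1), (t2, s2)}"
  show "card {(t1, s1), (t2, s2)} \<le> 2"
    by (simp add: card_insert_le_m1)
  show "\<forall>q'\<in>{(t1, s1), (t2, s2)}. pair_size q' < pair_size q"
    using size by (simp add: pair_size_equates[OF eqs(2)] pair_size_Pair)
  have "(Gen a, Op t1 t2) \<in> ccong A R" "(Gen a, Op s1 s2) \<in> ccong A R"
    using equates_ccong[OF pq(1) eqs(1)] equates_ccong[OF pq(2) eqs(2)] .
  then have "(Op t1 t2, Op s1 s2) \<in> ccong A R"
    by (rule ccong_trans[OF ccong_sym])
  note ccong_OpD1[OF this] ccong_OpD2[OF this]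
  then show "{(t1, s1), (t2, s2)} \<subseteq> ccong A R"
    by simp
  have "p \<in> ?R'"
    using pq by simp
  then have "(Gen a, Op t1 t2) \<in> ccong A ?R'"
    using eqs(1) by (rule equates_ccong)
  moreover have "(Op t1 t2, Op s1 s2) \<in> ccong A ?R'"
    by (intro ccong_Op ccong_rel) simp_all
  ultimately have "(Gen a, Op s1 s2) \<in> ccong A ?R'"
    by (rule ccong_trans)
  then show "q \<in> ccong A ?R'"
    using equates_ccong_iff[OF eqs(2)] by simp
qed simp

lemma identify_generators:
  assumes R: "finite R" "R \<subseteq> words A \<times> words A" and pq: "p \<in> R" "q \<in> R"
    and eqs: "equates p a (Op t1 t2)" "equates q b (Op t1 t2)" and ab: "a \<noteq> b"
  shows "simplifies_to A R (R - {q} \<union> {(Gen b, Gen a)})"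
proof (rule replace_relation[OF R pq(2)])
  let ?R' = "R - {q} \<union> {(Gen b, Gen a)}"
  show "\<forall>q'\<in>{(Gen b, Gen a)}. pair_size q' < pair_size q"
    by (cases t1) (simp_all add: pair_size_equates[OF eqs(2)] pair_size_Pair)
  have "(Gen a, Op t1 t2) \<in> ccong A R" "(Gen b, Op t1 t2) \<in> ccong A R"
    using equates_ccong[OF pq(1) eqs(1)] equates_ccong[OF pq(2) eqs(2)] .
  then have "(Gen b, Gen a) \<in> ccong A R"
    by (rule ccong_trans[OF _ ccong_sym, rotated])
  then show "{(Gen b, Gen a)} \<subseteq> ccong A R"
    by simp
  have "p \<noteq> q"
    using eqs ab by (auto simp: equates_def)
  then have "(Gen a, Op t1 t2) \<in> ccong A ?R'"
    using pq eqs(1) by (intro equates_ccong) simp_all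
  with ccong_rel have "(Gen b, Op t1 t2) \<in> ccong A ?R'"
    by (rule ccong_trans) simp
  then show "q \<in> ccong A ?R'"
    using equates_ccong_iff[OF eqs(2)] by simp
qed simp_all

definition defining_term :: "'a fm rel \<Rightarrow> 'a \<Rightarrow> 'a fm" where
  "defining_term R a =
     (if \<exists>p\<in>R. \<exists>t. equates p a t then THE t. \<exists>p\<in>R. equates p a t else Gen a)"

context
  fixes R :: "'a fm rel"
  assumes unique_term: "\<And>p q a t s. p \<in> R \<Longrightarrow> q \<in> R \<Longrightarrow> equates p a t \<Longrightarrow> equates q a s \<Longrightarrow> t = s"
begin

lemma defining_term_eq:
  assumes "p \<in> R" "equates p a t"
  shows "defining_term R a = t"
proof -
  have "(THE t. \<exists>p\<in>R. equates p a t) = t"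
    using assms unique_term by (intro the_equality) blast+
  then show ?thesis
    unfolding defining_term_def using assms by auto
qed

lemma defining_term_cases: "(\<exists>p\<in>R. equates p a (defining_term R a)) \<or> defining_term R a = Gen a"
proof (cases "\<exists>p\<in>R. \<exists>t. equates p a t")
  case True
  then obtain p t where "p \<in> R" "equates p a t"
    by blast
  then show ?thesis
    using defining_term_eq by blast
next
  case False
  then show ?thesis
    unfolding defining_term_def by (simp only: if_False) simp
qed

lemma E_form_defining_term:
  assumes R: "R \<subseteq> words A \<times> words A"
    and occurs: "\<And>p a t. p \<in> R \<Longrightarrow> equates p a t \<Longrightarrow> a \<in> letters t"
    and unique_gen: "\<And>p q a b t. p \<in> R \<Longrightarrow> q \<in> R \<Longrightarrow> equates p a t \<Longrightarrow> equates q b t \<Longrightarrow> a = b"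
  shows "E_form A (defining_term R)"
  unfolding E_form_def free_magma_simps
proof (intro conjI ballI inj_onI)
  fix a assume a: "a \<in> A"
  show "defining_term R a \<in> words A"
    using defining_term_cases[of a]
  proof (elim disjE bexE)
    fix p assume "p \<in> R" "equates p a (defining_term R a)"
    then show ?thesis
      using equates_words(2)[OF R] by simp
  qed (simp add: a)
  show "a \<in> letters (defining_term R a)"
    using defining_term_cases[of a] occurs by auto
next
  fix a b assume eq: "defining_term R a = defining_term R b"
  show "a = b"
    using defining_term_cases[of a] defining_term_cases[of b]
  proof (elim disjE bexE)
    fix p q assume "p \<in> R" "equates p a (defining_term R a)" "q \<in> R" "equates q b (defining_term R b)"
    then show "a = b"
      using unique_gen eq by metis
  next
    fix p assume "p \<in> R" "equates p a (defining_term R a)" "defining_term R b = Gen b"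
    then show "a = b"
      using occurs eq by fastforce
  next
    fix q assume "defining_term R a = Gen a" "q \<in> R" "equates q b (defining_term R b)"
    then show "a = b"
      using occurs eq by fastforce
  next
    assume "defining_term R a = Gen a" "defining_term R b = Gen b"
    then show "a = b"
      using eq by (metis fm.inject(1))
  qed
qed

lemma ccong_graph_rel_defining_term:
  assumes R: "R \<subseteq> words A \<times> words A" and gen_side: "\<And>p. p \<in> R \<Longrightarrow> \<exists>a t. equates p a t"
  shows "ccong A (graph_rel A (defining_term R)) = ccong A R"
proof (intro equalityI ccong_mono subsetI)
  fix g assume "g \<in> graph_rel A (defining_term R)"
  then obtain a where g: "g = (Gen a, defining_term R a)" "a \<in> A"
    unfolding graph_rel_def by blast
  show "g \<in> ccong A R"
    using defining_term_cases[of a]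
  proof (elim disjE bexE)
    fix p assume "p \<in> R" "equates p a (defining_term R a)"
    then show ?thesis
      unfolding g by (rule equates_ccong)
  next
    assume "defining_term R a = Gen a"
    then show ?thesis
      using g by (simp add: ccong_refl)
  qed
next
  fix p assume p: "p \<in> R"
  then obtain a t where eq: "equates p a t"
    using gen_side by blast
  have "a \<in> A"
    by (rule equates_words[OF R p eq])
  then have "(Gen a, t) \<in> graph_rel A (defining_term R)"
    unfolding graph_rel_def defining_term_eq[OF p eq, symmetric] by blast
  then have "(Gen a, t) \<in> ccong A (graph_rel A (defining_term R))"
    by (rule ccong_rel)
  then show "p \<in> ccong A (graph_rel A (defining_term R))"
    using equates_ccong_iff[OF eq] by simp
qed simp_all

end

context
  fixes A :: "'a set" and R :: "'a fm rel"
  assumes R_finite: "finite R" and R_words: "R \<subseteq> words A \<times> words A"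
    and irreducible: "\<not> (\<exists>R'. simplifies_to A R R')"
    and no_elimination: "\<not> (\<exists>p\<in>R. \<exists>a t. equates p a t \<and> a \<notin> letters t)"
begin

lemma irreducible_letters: "p \<in> R \<Longrightarrow> equates p a t \<Longrightarrow> a \<in> letters t"
  using no_elimination by blast

lemma irreducible_gen_side:
  assumes p: "p \<in> R"
  shows "\<exists>a t. equates p a t"
proof (cases p)
  case (Pair u v)
  show ?thesis
  proof (cases u)
    case (Gen a)
    then show ?thesis
      using Pair by (auto simp: equates_def)
  next
    case (Op x y)
    show ?thesis
    proof (cases v)
      case (Gen b)
      then show ?thesis
        using Pair by (auto simp: equates_def)
    next
      case (Op x' y')
      then show ?thesis
        using irreducible split_relation[OF R_finite R_words] p Pair \<open>u = Op x y\<close> by blast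
    qed
  qed
qed

lemma irreducible_equates_Op:
  assumes "p \<in> R" "equates p a t"
  obtains t1 t2 where "t = Op t1 t2"
proof (cases t)
  case (Gen b)
  then have "a = b"
    using irreducible_letters[OF assms] by simp
  then have "(Gen a, Gen a) \<in> R"
    using assms Gen by (auto simp: equates_def)
  then show ?thesis
    using irreducible drop_trivial_relation[OF R_finite R_words] by blast
qed

lemma irreducible_unique_term:
  assumes pq: "p \<in> R" "q \<in> R" and eqs: "equates p a t" "equates q a s"
  shows "t = s"
proof (rule ccontr)
  assume "t \<noteq> s"
  then have "p \<noteq> q"
    using eqs by (auto simp: equates_def)
  obtain t1 t2 s1 s2 where ts: "t = Op t1 t2" "s = Op s1 s2"
    using irreducible_equates_Op[OF pq(1) eqs(1)] irreducible_equates_Op[OF pq(2) eqs(2)] by metis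
  show False
  proof (cases "size t \<le> size s")
    case True
    then have "simplifies_to A R (R - {q} \<union> {(t1, s1), (t2, s2)})"
      using merge_generator_definitions[OF R_finite R_words pq \<open>p \<noteq> q\<close> eqs[unfolded ts]] ts by simp
    then show False
      using irreducible by blast
  next
    case False
    then have "simplifies_to A R (R - {p} \<union> {(s1, t1), (s2, t2)})"
      using merge_generator_definitions[OF R_finite R_words pq(2,1) \<open>p \<noteq> q\<close>[symmetric]
          eqs(2,1)[unfolded ts]] ts
      by simp
    then show False
      using irreducible by blast
  qed
qed

lemma irreducible_unique_gen:
  assumes pq: "p \<in> R" "q \<in> R" and eqs: "equates p a t" "equates q b t"
  shows "a = b"
proof (rule ccontr)
  assume "a \<noteq> b"
  moreover obtain t1 t2 where "t = Op t1 t2"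
    using irreducible_equates_Op[OF pq(1) eqs(1)] by blast
  ultimately have "simplifies_to A R (R - {q} \<union> {(Gen b, Gen a)})"
    using identify_generators[OF R_finite R_words pq] eqs by simp
  then show False
    using irreducible by blast
qed

lemma irreducible_E_form:
  "E_form A (defining_term R) \<and> ccong A (graph_rel A (defining_term R)) = ccong A R"
proof
  show "E_form A (defining_term R)"
    by (rule E_form_defining_term)
      (fact irreducible_unique_term R_words irreducible_letters irreducible_unique_gen)+
  show "ccong A (graph_rel A (defining_term R)) = ccong A R"
    by (rule ccong_graph_rel_defining_term)
      (fact irreducible_unique_term R_words irreducible_gen_side)+
qed

end

lemma simplify_or_eliminate_or_E_form:
  assumes "finite R" "R \<subseteq> words A \<times> words A"
  obtains (simplify) R' where "simplifies_to A R R'"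
    | (eliminate) p a t where "p \<in> R" "equates p a t" "a \<notin> letters t"
    | (E_form) "E_form A (defining_term R)" "ccong A (graph_rel A (defining_term R)) = ccong A R"
  using irreducible_E_form[OF assms] by blast

lemma graph_rel_words: "E_form A \<phi> \<Longrightarrow> graph_rel A \<phi> \<subseteq> words A \<times> words A"
  unfolding E_form_def graph_rel_def by auto

lemma E_magma_eq_presented: "E_magma A \<phi> = presented A (graph_rel A \<phi>)"
  by (simp add: E_magma_def presented_def)

lemma equidecomposable_presented:
  "R \<subseteq> words A \<times> words A \<Longrightarrow> equidecomposable (presented A R)"
  by (simp add: presented_eq_quotient_ccong equidecomposable_quotient_magma closed_congruence_ccong magma_free_magma)

lemma presented_iso_E_magma:
  fixes A :: "'a set"
  assumes "finite A" "A \<noteq> {}" "finite R" "R \<subseteq> words A \<times> words A"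
  shows "\<exists>(B::'a set) \<phi>. B \<noteq> {} \<and> E_form B \<phi> \<and> magma_iso (presented A R) (E_magma B \<phi>)"
  using assms
proof (induction "(card A, rel_weight R)" arbitrary: A R rule: less_induct)
  case less
  note A = less.prems(1,2) and R = less.prems(3,4)
  from R show ?case
  proof (cases rule: simplify_or_eliminate_or_E_form)
    case (simplify R')
    then have "presented A R' = presented A R" "finite R'" "R' \<subseteq> words A \<times> words A"
      "(card A, rel_weight R') < (card A, rel_weight R)"
      using R by (simp_all add: simplifies_to_def presented_eq_quotient_ccong)
    then show ?thesis
      using less.hyps A by metis
  next
    case (eliminate p a t)
    define f where "f = subst (Gen(a := t))"
    have a: "a \<in> A" "letters t \<subseteq> A - {a}"
      using equates_words[OF R(2) eliminate(1,2)] eliminate(3) by auto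
    have at: "(Gen a, t) \<in> ccong A R"
      using equates_ccong[OF eliminate(1,2)] .
    have R': "finite (map_prod f f ` R)" "map_prod f f ` R \<subseteq> words (A - {a}) \<times> words (A - {a})"
      using R(1) eliminate_generator(1)[OF R(2) at a(2)] unfolding f_def by simp_all
    have ne: "A - {a} \<noteq> {}"
      using a(2) letters_nonempty[of t] by auto
    have lt: "(card (A - {a}), rel_weight (map_prod f f ` R)) < (card A, rel_weight R)"
      using A a by (simp add: card_gt_0_iff)
    obtain B :: "'a set" and \<phi> where B:
      "B \<noteq> {}" "E_form B \<phi>" "magma_iso (presented (A - {a}) (map_prod f f ` R)) (E_magma B \<phi>)"
      using less.hyps[OF lt finite_Diff[OF A(1)] ne R'] by blast
    have "magma_iso (presented A R) (presented (A - {a}) (map_prod f f ` R))"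
      using eliminate_generator(2)[OF R(2) at a(2)] unfolding f_def .
    then show ?thesis
      using B magma_iso_trans by blast
  next
    case E_form
    then have "presented A R = E_magma A (defining_term R)"
      using R by (simp add: E_magma_eq_presented presented_eq_quotient_ccong graph_rel_words)
    then show ?thesis
      using A E_form magma_iso_refl by metis
  qed
qed

theorem theorem8p2:
  shows "(\<forall>(A::'a set) \<phi>. A \<noteq> {} \<and> E_form A \<phi> \<longrightarrow> equidecomposable (E_magma A \<phi>))
       \<and> (\<forall>M::'m magma. magma M \<and> equidecomposable M \<and> finitely_presented M \<longrightarrow>
            (\<exists>(A::nat set) \<phi>. A \<noteq> {} \<and> E_form A \<phi> \<and> magma_iso M (E_magma A \<phi>)))"
proof (intro conjI allI impI)
  fix A :: "'a set" and \<phi>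
  assume "A \<noteq> {} \<and> E_form A \<phi>"
  then show "equidecomposable (E_magma A \<phi>)"
    by (simp add: E_magma_eq_presented equidecomposable_presented graph_rel_words)
next
  fix M :: "'m magma"
  assume "magma M \<and> equidecomposable M \<and> finitely_presented M"
  then obtain A :: "nat set" and R where A: "A \<noteq> {}" "finite A" and R: "finite R"
    "R \<subseteq> words A \<times> words A" and M: "magma_iso M (presented A R)"
    unfolding finitely_presented_def by auto
  obtain B :: "nat set" and \<phi> where B: "B \<noteq> {}" "E_form B \<phi>" "magma_iso (presented A R) (E_magma B \<phi>)"
    using presented_iso_E_magma[OF A(2,1) R] by blast
  then show "\<exists>(A::nat set) \<phi>. A \<noteq> {} \<and> E_form A \<phi> \<and> magma_iso M (E_magma A \<phi>)"
    using magma_iso_trans[OF M B(3)] by blast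
qed

end
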